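(* Let $X$ be a non-degenerate commutative Banach algebra and $a\in X$. Suppose there is a derivation $M$ on $X$ with $Ma\neq0$. Then $cI+M_a$ is not supercyclic for every $c\in\mathbb{K}$. If additionally there exists $R\in L(X)$ with dense range, commuting with $M_a$, and with $R(X)\subseteq Y$ for some Banach space $Y\in\mathcal{Y}$ embedded into $X$, then $cI+M_a$ is not weakly supercyclic for every $c\in\mathbb{K}$.
   Context: Banach algebras need not be unital; $M_ab=ab$; $X$ is non-degenerate if $M_a=0$ implies $a=0$. A derivation on $X$ is $M\in L(X)$ with $M(ab)=(Ma)b+a(Mb)$ for all $a,b$. $T$ is supercyclic (resp. weakly supercyclic) if for some $x$ the set $\{zT^nx:z\in\mathbb{K},n\in\mathbb{Z}_+\}$ is norm (resp. weakly) dense. A Banach space $Y$ embedded into $X$ is a linear subspace of $X$ with its own complete norm inducing a topology stronger than the inherited one. $\mathcal{Y}$ is the class of Banach spaces $X$ such that for every sequence $(x_n)$ in $X$ with $n=O(\|x_n\|)$ as $n\to\infty$, the set $\{x_n:n\in\mathbb{Z}_+\}$ is weakly closed. *)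

theory Defs
  imports "HOL-Analysis.Analysis" "HOL-Library.Landau_Symbols"
begin

text \<open>Scalar field K: real (cplx = False) or complex (cplx = True).
  A complex structure on a real Banach algebra is encoded by an operator J
  (multiplication by i); complex scalar z acts as Re z *R x + Im z *R J x.\<close>

definition scal :: "('a::real_vector \<Rightarrow> 'a) \<Rightarrow> complex \<Rightarrow> 'a \<Rightarrow> 'a" where
  "scal J z x = Re z *\<^sub>R x + Im z *\<^sub>R J x"

definition scalars :: "bool \<Rightarrow> complex set" where
  "scalars cplx = (if cplx then UNIV else \<real>)"

definition scalar_structure ::
  "bool \<Rightarrow> ('a::{real_normed_algebra, comm_ring} \<Rightarrow> 'a) \<Rightarrow> bool" where
  "scalar_structure cplx J =
    (if cplx then
       bounded_linear J \<and> (\<forall>x. J (J x) = - x) \<and> (\<forall>x y. J (x * y) = J x * y)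
       \<and> (\<forall>z x. norm (scal J z x) = cmod z * norm x)
     else J = (\<lambda>x. 0))"

definition lin_op :: "bool \<Rightarrow> ('a::real_normed_vector \<Rightarrow> 'a) \<Rightarrow> ('a \<Rightarrow> 'a) \<Rightarrow> bool" where
  "lin_op cplx J T = (bounded_linear T \<and>
     (\<forall>z\<in>scalars cplx. \<forall>x. T (scal J z x) = scal J z (T x)))"

definition non_degenerate :: "'a::{real_normed_algebra, comm_ring} itself \<Rightarrow> bool" where
  "non_degenerate _ = (\<forall>a::'a. (\<forall>b. a * b = 0) \<longrightarrow> a = 0)"

definition derivation ::
  "bool \<Rightarrow> ('a::{real_normed_algebra, comm_ring} \<Rightarrow> 'a) \<Rightarrow> ('a \<Rightarrow> 'a) \<Rightarrow> bool" where
  "derivation cplx J M = (lin_op cplx J M \<and> (\<forall>a b. M (a * b) = M a * b + a * M b))"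

definition orbit_cone ::
  "bool \<Rightarrow> ('a::real_vector \<Rightarrow> 'a) \<Rightarrow> ('a \<Rightarrow> 'a) \<Rightarrow> 'a \<Rightarrow> 'a set" where
  "orbit_cone cplx J T x = {scal J z ((T ^^ n) x) | z n. z \<in> scalars cplx}"

definition supercyclic ::
  "bool \<Rightarrow> ('a::real_normed_vector \<Rightarrow> 'a) \<Rightarrow> ('a \<Rightarrow> 'a) \<Rightarrow> bool" where
  "supercyclic cplx J T = (\<exists>x. closure (orbit_cone cplx J T x) = UNIV)"

text \<open>Weak density: every basic weak neighbourhood of every point meets S.
  Real-valued bounded real-linear functionals generate the weak topology
  (also in the complex case, via real parts).\<close>
definition weakly_dense :: "'a::real_normed_vector set \<Rightarrow> bool" where
  "weakly_dense S = (\<forall>x. \<forall>F::('a \<Rightarrow> real) set. \<forall>e>0.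
      finite F \<and> (\<forall>f\<in>F. bounded_linear f) \<longrightarrow>
      (\<exists>s\<in>S. \<forall>f\<in>F. \<bar>f s - f x\<bar> < e))"

definition weakly_supercyclic ::
  "bool \<Rightarrow> ('a::real_normed_vector \<Rightarrow> 'a) \<Rightarrow> ('a \<Rightarrow> 'a) \<Rightarrow> bool" where
  "weakly_supercyclic cplx J T = (\<exists>x. weakly_dense (orbit_cone cplx J T x))"

definition embedded_banach ::
  "bool \<Rightarrow> ('a::real_normed_vector \<Rightarrow> 'a) \<Rightarrow> 'a set \<Rightarrow> ('a \<Rightarrow> real) \<Rightarrow> bool" where
  "embedded_banach cplx J Y nY =
    (0 \<in> Y \<and> (\<forall>x\<in>Y. \<forall>y\<in>Y. x + y \<in> Y) \<and> (\<forall>z\<in>scalars cplx. \<forall>y\<in>Y. scal J z y \<in> Y)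
     \<and> (\<forall>y\<in>Y. 0 \<le> nY y \<and> (nY y = 0 \<longleftrightarrow> y = 0))
     \<and> (\<forall>x\<in>Y. \<forall>y\<in>Y. nY (x + y) \<le> nY x + nY y)
     \<and> (\<forall>z\<in>scalars cplx. \<forall>y\<in>Y. nY (scal J z y) = cmod z * nY y)
     \<and> (\<forall>s::nat \<Rightarrow> 'a. (\<forall>n. s n \<in> Y) \<and>
           (\<forall>e>0. \<exists>N. \<forall>m\<ge>N. \<forall>n\<ge>N. nY (s m - s n) < e) \<longrightarrow>
           (\<exists>y\<in>Y. \<forall>e>0. \<exists>N. \<forall>n\<ge>N. nY (s n - y) < e))
     \<and> (\<forall>y\<in>Y. \<forall>e>0. \<exists>d>0. \<forall>y'\<in>Y. nY (y' - y) < d \<longrightarrow> norm (y' - y) < e))"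

definition Y_functional :: "'a::real_vector set \<Rightarrow> ('a \<Rightarrow> real) \<Rightarrow> ('a \<Rightarrow> real) \<Rightarrow> bool" where
  "Y_functional Y nY f = ((\<forall>x\<in>Y. \<forall>y\<in>Y. f (x + y) = f x + f y)
     \<and> (\<forall>r. \<forall>y\<in>Y. f (r *\<^sub>R y) = r * f y)
     \<and> (\<exists>K. \<forall>y\<in>Y. \<bar>f y\<bar> \<le> K * nY y))"

definition weakly_closed_in :: "'a::real_vector set \<Rightarrow> ('a \<Rightarrow> real) \<Rightarrow> 'a set \<Rightarrow> bool" where
  "weakly_closed_in Y nY S = (S \<subseteq> Y \<and>
     (\<forall>y\<in>Y - S. \<exists>F e. finite F \<and> (\<forall>f\<in>F. Y_functional Y nY f) \<and> e > 0 \<and>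
        (\<forall>y'\<in>Y. (\<forall>f\<in>F. \<bar>f y' - f y\<bar> < e) \<longrightarrow> y' \<notin> S)))"

definition in_class_Y :: "'a::real_vector set \<Rightarrow> ('a \<Rightarrow> real) \<Rightarrow> bool" where
  "in_class_Y Y nY = (\<forall>xs::nat \<Rightarrow> 'a. (\<forall>n. xs n \<in> Y) \<and>
      (\<lambda>n. real n) \<in> O(\<lambda>n. nY (xs n)) \<longrightarrow> weakly_closed_in Y nY (range xs))"

end

theory Submission
  imports Defs
begin

text \<open>
  The argument
  proves this for every c.

  Writing b = M a, the key identity is T (W_x (T^n x)) = -n b x T^n x for the Wronskian-type
  map W_x u = u M x - x M u.  Hence on the orbit cone of x the two bounded functionals
  u \<mapsto> g (T (W_x u)) and u \<mapsto> g (b x u) have a non-positive integer ratio, which is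
  incompatible with weak density once g is chosen non-zero at b x x and T (b x x).  These two
  elements are non-zero because a weakly dense set cannot lie in a union of two proper closed
  subspaces, and a non-degenerate algebra spanned by a single vector has no non-zero derivation.
\<close>

text \<open>A set G of pairs is the graph of a real-linear functional on some subspace,
  dominated there by p.  Hahn-Banach is proved by enlarging such graphs.\<close>

definition dominated_graph :: "('a::real_vector \<Rightarrow> real) \<Rightarrow> ('a \<times> real) set \<Rightarrow> bool" where
  "dominated_graph p G \<longleftrightarrow>
     (\<forall>u a b. (u, a) \<in> G \<longrightarrow> (u, b) \<in> G \<longrightarrow> a = b)
   \<and> (\<forall>u a v b. (u, a) \<in> G \<longrightarrow> (v, b) \<in> G \<longrightarrow> (u + v, a + b) \<in> G)
   \<and> (\<forall>u a r. (u, a) \<in> G \<longrightarrow> (r *\<^sub>R u, r * a) \<in> G)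
   \<and> (\<forall>u a. (u, a) \<in> G \<longrightarrow> a \<le> p u)"

lemma dominated_graphD:
  assumes "dominated_graph p G"
  shows dominated_graph_unique: "(u, a) \<in> G \<Longrightarrow> (u, b) \<in> G \<Longrightarrow> a = b"
    and dominated_graph_add: "(u, a) \<in> G \<Longrightarrow> (v, b) \<in> G \<Longrightarrow> (u + v, a + b) \<in> G"
    and dominated_graph_scale: "(u, a) \<in> G \<Longrightarrow> (r *\<^sub>R u, r * a) \<in> G"
    and dominated_graph_le: "(u, a) \<in> G \<Longrightarrow> a \<le> p u"
  using assms unfolding dominated_graph_def by blast+

lemma dominated_graph_Union_chain:
  assumes chain: "subset.chain {G. dominated_graph p G} C"
  shows "dominated_graph p (\<Union>C)"
proof -
  have dom: "\<And>G. G \<in> C \<Longrightarrow> dominated_graph p G"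
    and lin: "\<And>G H. G \<in> C \<Longrightarrow> H \<in> C \<Longrightarrow> G \<subseteq> H \<or> H \<subseteq> G"
    using chain unfolding subset.chain_def by auto
  have common: "\<exists>G\<in>C. P \<in> G \<and> Q \<in> G" if "P \<in> \<Union>C" "Q \<in> \<Union>C" for P Q
    using that lin by blast
  show ?thesis
    unfolding dominated_graph_def
  proof (intro conjI allI impI)
    fix u a b assume "(u, a) \<in> \<Union>C" "(u, b) \<in> \<Union>C"
    then show "a = b" using common dom dominated_graph_unique by metis
  next
    fix u a v b assume "(u, a) \<in> \<Union>C" "(v, b) \<in> \<Union>C"
    then show "(u + v, a + b) \<in> \<Union>C" using common dom dominated_graph_add by (metis UnionI)
  next
    fix u a r assume "(u, a) \<in> \<Union>C"
    then show "(r *\<^sub>R u, r * a) \<in> \<Union>C" using dom dominated_graph_scale by blast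
  next
    fix u a assume "(u, a) \<in> \<Union>C"
    then show "a \<le> p u" using dom dominated_graph_le by blast
  qed
qed

lemma dominated_graph_extension_value:
  fixes p :: "'a::real_vector \<Rightarrow> real"
  assumes sub: "\<And>u v. p (u + v) \<le> p u + p v"
    and G: "dominated_graph p G" and zero: "(0, 0) \<in> G"
  obtains c where "\<And>v a. (v, a) \<in> G \<Longrightarrow> a - p (v - z) \<le> c"
    and "\<And>w b. (w, b) \<in> G \<Longrightarrow> c \<le> p (w + z) - b"
proof
  define S where "S = {a - p (v - z) | v a. (v, a) \<in> G}"
  have bound: "a - p (v - z) \<le> p (w + z) - b" if "(v, a) \<in> G" "(w, b) \<in> G" for v a w b
  proof -
    have "a + b \<le> p (v + w)" using dominated_graph_le[OF G dominated_graph_add[OF G that]] .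
    also have "\<dots> = p ((v - z) + (w + z))" by (simp add: algebra_simps)
    also have "\<dots> \<le> p (v - z) + p (w + z)" by (rule sub)
    finally show ?thesis by simp
  qed
  have "bdd_above S"
    using bound[OF _ zero] unfolding S_def by (auto intro!: bdd_aboveI[of _ "p (0 + z) - 0"])
  then show "a - p (v - z) \<le> Sup S" if "(v, a) \<in> G" for v a
    using that by (auto simp: S_def intro!: cSup_upper)
  show "Sup S \<le> p (w + z) - b" if "(w, b) \<in> G" for w b
    using zero bound that unfolding S_def by (auto intro!: cSup_least)
qed

text \<open>Such a value keeps the extended functional v + t z \<mapsto> a + t c below p
  (the positively homogeneous rescaling of the two bounds).\<close>

lemma dominated_extension_le:
  fixes p :: "'a::real_vector \<Rightarrow> real"
  assumes hom: "\<And>r u. r > 0 \<Longrightarrow> p (r *\<^sub>R u) = r * p u"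
    and G: "dominated_graph p G" and va: "(v, a) \<in> G"
    and lower: "\<And>v a. (v, a) \<in> G \<Longrightarrow> a - p (v - z) \<le> c"
    and upper: "\<And>w b. (w, b) \<in> G \<Longrightarrow> c \<le> p (w + z) - b"
  shows "a + t * c \<le> p (v + t *\<^sub>R z)"
proof (cases t "0::real" rule: linorder_cases)
  case less
  define s where "s = - t"
  have s: "s > 0" using less by (simp add: s_def)
  have rescale: "s *\<^sub>R ((1 / s) *\<^sub>R v - z) = v + t *\<^sub>R z"
    using s by (simp add: s_def algebra_simps)
  have "a / s - p ((1 / s) *\<^sub>R v - z) \<le> c"
    using lower[OF dominated_graph_scale[OF G va, of "1 / s"]] by simp
  then have "a - s * p ((1 / s) *\<^sub>R v - z) \<le> s * c"
    using s by (simp add: field_simps)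
  then have "a - p (v + t *\<^sub>R z) \<le> s * c"
    using hom[OF s, of "(1 / s) *\<^sub>R v - z"] rescale by simp
  then show ?thesis by (simp add: s_def)
next
  case equal
  then show ?thesis using dominated_graph_le[OF G va] by simp
next
  case greater
  have rescale: "t *\<^sub>R ((1 / t) *\<^sub>R v + z) = v + t *\<^sub>R z"
    using greater by (simp add: algebra_simps)
  have "c \<le> p ((1 / t) *\<^sub>R v + z) - a / t"
    using upper[OF dominated_graph_scale[OF G va, of "1 / t"]] by simp
  then have "t * c \<le> t * p ((1 / t) *\<^sub>R v + z) - a"
    using greater by (simp add: field_simps)
  then show ?thesis
    using hom[OF greater, of "(1 / t) *\<^sub>R v + z"] rescale by simp
qed

definition graph_extension :: "('a::real_vector \<times> real) set \<Rightarrow> 'a \<Rightarrow> real \<Rightarrow> ('a \<times> real) set" where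
  "graph_extension G z c = {(v + t *\<^sub>R z, a + t * c) | v a t. (v, a) \<in> G}"

lemma graph_extension_coordinate:
  assumes G: "dominated_graph p G" and new: "\<And>a. (z, a) \<notin> G"
    and "(v, a) \<in> G" "(v', a') \<in> G" "v + t *\<^sub>R z = v' + t' *\<^sub>R z"
  shows "t = t'"
proof (rule ccontr)
  assume "t \<noteq> t'"
  have "v' - v = (t - t') *\<^sub>R z" using assms(5) by (simp add: algebra_simps)
  then have "z = (1 / (t - t')) *\<^sub>R (v' + (-1) *\<^sub>R v)" using \<open>t \<noteq> t'\<close> by simp
  moreover have "((1 / (t - t')) *\<^sub>R (v' + (-1) *\<^sub>R v), (1 / (t - t')) * (a' + (-1) * a)) \<in> G"
    using G assms(3,4) by (intro dominated_graph_scale dominated_graph_add) auto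
  ultimately show False using new by metis
qed

lemma dominated_graph_extension:
  fixes p :: "'a::real_vector \<Rightarrow> real"
  assumes hom: "\<And>r u. r > 0 \<Longrightarrow> p (r *\<^sub>R u) = r * p u"
    and G: "dominated_graph p G" and zero: "(0, 0) \<in> G" and new: "\<And>a. (z, a) \<notin> G"
    and lower: "\<And>v a. (v, a) \<in> G \<Longrightarrow> a - p (v - z) \<le> c"
    and upper: "\<And>w b. (w, b) \<in> G \<Longrightarrow> c \<le> p (w + z) - b"
  shows "dominated_graph p (graph_extension G z c)"
    and "G \<subseteq> graph_extension G z c" and "(z, c) \<in> graph_extension G z c"
proof -
  let ?G' = "graph_extension G z c"
  note coord = graph_extension_coordinate[OF G new]
  show "dominated_graph p ?G'"
    unfolding dominated_graph_def
  proof (intro conjI allI impI)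
    fix u a1 b1 assume "(u, a1) \<in> ?G'" "(u, b1) \<in> ?G'"
    then obtain v a t v' a' t' where "u = v + t *\<^sub>R z" "a1 = a + t * c" "(v, a) \<in> G"
      "u = v' + t' *\<^sub>R z" "b1 = a' + t' * c" "(v', a') \<in> G"
      unfolding graph_extension_def by blast
    then show "a1 = b1" using coord dominated_graph_unique[OF G] by (metis add_right_cancel)
  next
    fix u a1 w b1 assume "(u, a1) \<in> ?G'" "(w, b1) \<in> ?G'"
    then obtain v a t v' a' t' where h: "u = v + t *\<^sub>R z" "a1 = a + t * c" "(v, a) \<in> G"
      "w = v' + t' *\<^sub>R z" "b1 = a' + t' * c" "(v', a') \<in> G"
      unfolding graph_extension_def by blast
    have "u + w = (v + v') + (t + t') *\<^sub>R z" "a1 + b1 = (a + a') + (t + t') * c"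
      using h by (simp_all add: algebra_simps)
    then show "(u + w, a1 + b1) \<in> ?G'"
      using dominated_graph_add[OF G h(3,6)] unfolding graph_extension_def by blast
  next
    fix u a1 r assume "(u, a1) \<in> ?G'"
    then obtain v a t where h: "u = v + t *\<^sub>R z" "a1 = a + t * c" "(v, a) \<in> G"
      unfolding graph_extension_def by blast
    have "r *\<^sub>R u = r *\<^sub>R v + (r * t) *\<^sub>R z" "r * a1 = r * a + (r * t) * c"
      using h by (simp_all add: algebra_simps)
    then show "(r *\<^sub>R u, r * a1) \<in> ?G'"
      using dominated_graph_scale[OF G h(3)] unfolding graph_extension_def by blast
  next
    fix u a1 assume "(u, a1) \<in> ?G'"
    then show "a1 \<le> p u"
      unfolding graph_extension_def using dominated_extension_le[OF hom G _ lower upper] by blast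
  qed
  show "G \<subseteq> ?G'"
    unfolding graph_extension_def by (force intro: exI[of _ 0])
  have "(0 + 1 *\<^sub>R z, 0 + 1 * c) \<in> ?G'"
    unfolding graph_extension_def using zero by blast
  then show "(z, c) \<in> ?G'" by simp
qed

lemma maximal_dominated_graph:
  assumes G0: "dominated_graph p G0"
  obtains G where "dominated_graph p G" "G0 \<subseteq> G"
    and "\<And>H. dominated_graph p H \<Longrightarrow> G \<subseteq> H \<Longrightarrow> H = G"
proof -
  define A where "A = {G. dominated_graph p G \<and> G0 \<subseteq> G}"
  have "\<exists>G\<in>A. \<forall>H\<in>A. G \<subseteq> H \<longrightarrow> H = G"
  proof (rule subset_Zorn_nonempty)
    show "A \<noteq> {}" using G0 unfolding A_def by blast
    fix C assume "C \<noteq> {}" and chain: "subset.chain A C"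
    have CA: "C \<subseteq> A" using chain unfolding subset.chain_def by blast
    have "subset.chain {G. dominated_graph p G} C"
      using chain CA unfolding A_def subset.chain_def by blast
    then have "dominated_graph p (\<Union>C)" by (rule dominated_graph_Union_chain)
    moreover have "G0 \<subseteq> \<Union>C"
    proof -
      obtain G where "G \<in> C" using \<open>C \<noteq> {}\<close> by blast
      then have "G0 \<subseteq> G" using CA unfolding A_def by auto
      with \<open>G \<in> C\<close> show ?thesis by auto
    qed
    ultimately show "\<Union>C \<in> A" unfolding A_def by blast
  qed
  then obtain G where "G \<in> A" and maximal: "\<And>H. H \<in> A \<Longrightarrow> G \<subseteq> H \<Longrightarrow> H = G"
    by blast
  then have "dominated_graph p G" and "G0 \<subseteq> G" unfolding A_def by auto
  moreover have "H = G" if "dominated_graph p H" "G \<subseteq> H" for H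
    using maximal[of H] that \<open>G0 \<subseteq> G\<close> unfolding A_def by auto
  ultimately show thesis by (rule that)
qed

text \<open>Hahn-Banach for a sublinear functional p on a real vector space: a maximal dominated
  graph is total, since otherwise it could be extended; it is then the graph of a linear
  functional below p.\<close>

lemma hahn_banach_sublinear:
  fixes p :: "'a::real_vector \<Rightarrow> real"
  assumes sub: "\<And>u v. p (u + v) \<le> p u + p v"
    and hom: "\<And>r u. r > 0 \<Longrightarrow> p (r *\<^sub>R u) = r * p u"
    and G0: "dominated_graph p G0" and nonempty: "G0 \<noteq> {}"
  obtains f where "linear f" and "\<And>u. f u \<le> p u" and "\<And>u a. (u, a) \<in> G0 \<Longrightarrow> f u = a"
proof -
  obtain G where G: "dominated_graph p G" and G0G: "G0 \<subseteq> G"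
    and maximal: "\<And>H. dominated_graph p H \<Longrightarrow> G \<subseteq> H \<Longrightarrow> H = G"
    using maximal_dominated_graph[OF G0] by blast
  have zero: "(0, 0) \<in> G"
  proof -
    obtain u a where "(u, a) \<in> G" using nonempty G0G by auto
    from dominated_graph_scale[OF G this, of 0] show ?thesis by simp
  qed
  have total: "\<exists>a. (u, a) \<in> G" for u
  proof (rule ccontr)
    assume new: "\<nexists>a. (u, a) \<in> G"
    obtain c where "\<And>v a. (v, a) \<in> G \<Longrightarrow> a - p (v - u) \<le> c"
      and "\<And>w b. (w, b) \<in> G \<Longrightarrow> c \<le> p (w + u) - b"
      using dominated_graph_extension_value[OF sub G zero] by metis
    note extension = dominated_graph_extension[OF hom G zero _ this]
    then have "graph_extension G u c = G" using maximal new by blast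
    then show False using extension(3) new by auto
  qed
  define f where "f u = (THE a. (u, a) \<in> G)" for u
  have on_graph: "(u, f u) \<in> G" for u
    using total[of u] dominated_graph_unique[OF G] unfolding f_def by (metis theI)
  have graph_value: "f u = a" if "(u, a) \<in> G" for u a
    using dominated_graph_unique[OF G on_graph that] .
  show thesis
  proof
    show "linear f"
    proof (rule linearI)
      show "f (u + v) = f u + f v" for u v
        using graph_value[OF dominated_graph_add[OF G on_graph on_graph]] .
      show "f (r *\<^sub>R u) = r *\<^sub>R f u" for r u
        using graph_value[OF dominated_graph_scale[OF G on_graph]] by simp
    qed
    show "f u \<le> p u" for u using dominated_graph_le[OF G on_graph] .
    show "(u, a) \<in> G0 \<Longrightarrow> f u = a" for u a using graph_value G0G by blast
  qed
qed

lemma infdist_subspace_add: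
  fixes V :: "'a::real_normed_vector set"
  assumes V: "subspace V"
  shows "infdist (u + v) V \<le> infdist u V + infdist v V"
proof -
  have ne: "V \<noteq> {}" using V subspace_0 by blast
  have "infdist (u + v) V \<le> dist u a + dist v b" if "a \<in> V" "b \<in> V" for a b
  proof -
    have "infdist (u + v) V \<le> dist (u + v) (a + b)"
      using V that by (intro infdist_le subspace_add)
    also have "\<dots> \<le> dist u a + dist v b"
      using norm_triangle_ineq[of "u - a" "v - b"] by (simp add: dist_norm algebra_simps)
    finally show ?thesis .
  qed
  then have "infdist (u + v) V - dist v b \<le> infdist u V" if "b \<in> V" for b
    using that unfolding infdist_notempty[OF ne]
    by (intro cINF_greatest[OF ne]) (simp add: algebra_simps)
  then have "infdist (u + v) V - infdist u V \<le> infdist v V"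
    unfolding infdist_notempty[OF ne] by (intro cINF_greatest[OF ne]) (simp add: algebra_simps)
  then show ?thesis by simp
qed

lemma infdist_subspace_scale_le:
  fixes V :: "'a::real_normed_vector set"
  assumes V: "subspace V" and r: "r > 0"
  shows "infdist (r *\<^sub>R u) V \<le> r * infdist u V"
proof -
  have ne: "V \<noteq> {}" using V subspace_0 by blast
  have "infdist (r *\<^sub>R u) V / r \<le> dist u a" if "a \<in> V" for a
  proof -
    have "infdist (r *\<^sub>R u) V \<le> dist (r *\<^sub>R u) (r *\<^sub>R a)"
      using V that by (intro infdist_le subspace_scale)
    also have "\<dots> = r * dist u a"
      using r by (simp add: dist_norm flip: scaleR_diff_right)
    finally show ?thesis using r by (simp add: divide_simps mult.commute)
  qed
  then have "infdist (r *\<^sub>R u) V / r \<le> infdist u V"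
    unfolding infdist_notempty[OF ne] by (intro cINF_greatest[OF ne])
  then show ?thesis using r by (simp add: divide_simps mult.commute)
qed

lemma infdist_subspace_scale:
  fixes V :: "'a::real_normed_vector set"
  assumes V: "subspace V" and r: "r > 0"
  shows "infdist (r *\<^sub>R u) V = r * infdist u V"
proof -
  have "infdist u V = infdist ((1 / r) *\<^sub>R (r *\<^sub>R u)) V" using r by simp
  also have "\<dots> \<le> (1 / r) * infdist (r *\<^sub>R u) V"
    using r by (intro infdist_subspace_scale_le[OF V]) simp
  finally have "r * infdist u V \<le> infdist (r *\<^sub>R u) V" using r by (simp add: field_simps)
  with infdist_subspace_scale_le[OF V r, of u] show ?thesis by linarith
qed

lemma linear_below_norm_bounded:
  fixes f :: "'a::real_normed_vector \<Rightarrow> real"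
  assumes f: "linear f" and below: "\<And>u. f u \<le> norm u"
  shows "bounded_linear f"
proof (rule bounded_linear_intro[where K = 1])
  show "f (u + v) = f u + f v" "f (r *\<^sub>R u) = r *\<^sub>R f u" for u v r
    using f by (simp_all add: linear_add linear_scale)
  show "norm (f u) \<le> norm u * 1" for u
    using below[of u] below[of "- u"] linear_neg[OF f, of u] by simp
qed

text \<open>Separation of a point from a closed subspace by a bounded functional: extend the functional
  v + t y \<mapsto> t d (where d is the distance of y to V) dominated by the distance to V.\<close>

lemma closed_subspace_separation:
  fixes V :: "'a::real_normed_vector set"
  assumes V: "subspace V" and closed: "closed V" and y: "y \<notin> V"
  obtains f :: "'a \<Rightarrow> real" where "bounded_linear f" "\<And>v. v \<in> V \<Longrightarrow> f v = 0" "f y \<noteq> 0"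
proof -
  have ne: "V \<noteq> {}" using V subspace_0 by blast
  define p where "p u = infdist u V" for u
  define d where "d = infdist y V"
  define GV where "GV = {(v, 0::real) | v. v \<in> V}"
  have d: "d > 0" unfolding d_def using infdist_pos_not_in_closed[OF closed ne y] .
  have sub: "p (u + v) \<le> p u + p v" for u v
    unfolding p_def by (rule infdist_subspace_add[OF V])
  have hom: "p (r *\<^sub>R u) = r * p u" if "r > 0" for r u
    unfolding p_def by (rule infdist_subspace_scale[OF V that])
  have GV: "dominated_graph p GV"
    using V by (auto simp: dominated_graph_def GV_def p_def subspace_add subspace_scale)
  have zero: "(0, 0) \<in> GV" using V subspace_0 unfolding GV_def by blast
  have new: "(y, a) \<notin> GV" for a using y unfolding GV_def by blast
  have lower: "a - p (v - y) \<le> d" if "(v, a) \<in> GV" for v a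
    using that d infdist_nonneg[of "v - y" V] by (auto simp: GV_def p_def)
  have upper: "d \<le> p (w + y) - b" if "(w, b) \<in> GV" for w b
  proof -
    have w: "w \<in> V" "b = 0" using that unfolding GV_def by auto
    have "d \<le> p (w + y) + p (- w)" unfolding d_def p_def
      using infdist_subspace_add[OF V, of "w + y" "- w"] by simp
    also have "p (- w) = 0" using V w by (simp add: p_def subspace_neg)
    finally show ?thesis using w by simp
  qed
  note extension = dominated_graph_extension[OF hom GV zero new lower upper]
  obtain f where f: "linear f" "\<And>u. f u \<le> p u"
    and extends: "\<And>u a. (u, a) \<in> graph_extension GV y d \<Longrightarrow> f u = a"
    using hahn_banach_sublinear[OF sub hom extension(1)] extension(3) by blast
  have "p u \<le> norm u" for u
    using infdist_le[OF subspace_0[OF V], of u] by (simp add: p_def)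
  then have "bounded_linear f"
    using f order_trans by (blast intro: linear_below_norm_bounded)
  moreover have "f v = 0" if "v \<in> V" for v
    using extends extension(2) that unfolding GV_def by blast
  moreover have "f y \<noteq> 0" using extends[OF extension(3)] d by simp
  ultimately show thesis by (rule that)
qed

text \<open>Norm density implies weak density: finitely many bounded functionals define an open set.\<close>

lemma dense_imp_weakly_dense:
  fixes C :: "'a::real_normed_vector set"
  assumes "closure C = UNIV"
  shows "weakly_dense C"
  unfolding weakly_dense_def
proof (intro allI impI)
  fix x and F :: "('a \<Rightarrow> real) set" and e :: real
  assume "e > 0" and F: "finite F \<and> (\<forall>f\<in>F. bounded_linear f)"
  define U where "U = (\<Inter>f\<in>F. {s. \<bar>f s - f x\<bar> < e})"
  have "open {s. \<bar>f s - f x\<bar> < e}" if "f \<in> F" for f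
    using F that by (intro open_Collect_less continuous_intros) (auto intro: linear_continuous_on)
  then have "open U" unfolding U_def using F by (intro open_INT) auto
  moreover have "x \<in> U" using \<open>e > 0\<close> unfolding U_def by simp
  ultimately have "U \<inter> C \<noteq> {}" using open_Int_closure_eq_empty[of U C] assms by auto
  then show "\<exists>s\<in>C. \<forall>f\<in>F. \<bar>f s - f x\<bar> < e" unfolding U_def by blast
qed

text \<open>A weakly dense set is not covered by two proper closed subspaces: a point outside both
  is separated from each by a functional, and these two functionals give a weak neighbourhood
  missing both subspaces.\<close>

lemma weakly_dense_in_union_of_closed_subspaces:
  fixes C :: "'a::real_normed_vector set"
  assumes dense: "weakly_dense C" and covered: "C \<subseteq> V1 \<union> V2"
    and V1: "subspace V1" "closed V1" and V2: "subspace V2" "closed V2"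
  shows "V1 = UNIV \<or> V2 = UNIV"
proof (rule ccontr)
  assume "\<not> (V1 = UNIV \<or> V2 = UNIV)"
  then obtain p q where p: "p \<notin> V1" and q: "q \<notin> V2" by blast
  have "\<exists>y. y \<notin> V1 \<and> y \<notin> V2"
  proof (cases "p \<in> V2 \<and> q \<in> V1")
    case True
    have "p + q \<notin> V1" using p True V1(1) subspace_diff[of V1 "p + q" q] by auto
    moreover have "p + q \<notin> V2" using q True V2(1) subspace_diff[of V2 "p + q" p] by auto
    ultimately show ?thesis by blast
  qed (use p q in blast)
  then obtain y where y: "y \<notin> V1" "y \<notin> V2" by blast
  obtain f1 :: "'a \<Rightarrow> real" where f1: "bounded_linear f1" "\<And>v. v \<in> V1 \<Longrightarrow> f1 v = 0" "f1 y \<noteq> 0"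
    using closed_subspace_separation[OF V1 y(1)] by blast
  obtain f2 :: "'a \<Rightarrow> real" where f2: "bounded_linear f2" "\<And>v. v \<in> V2 \<Longrightarrow> f2 v = 0" "f2 y \<noteq> 0"
    using closed_subspace_separation[OF V2 y(2)] by blast
  define e where "e = min \<bar>f1 y\<bar> \<bar>f2 y\<bar>"
  have "e > 0" unfolding e_def using f1(3) f2(3) by simp
  then obtain s where "s \<in> C" and s: "\<bar>f1 s - f1 y\<bar> < e" "\<bar>f2 s - f2 y\<bar> < e"
    using dense f1(1) f2(1) unfolding weakly_dense_def
    by (metis (no_types, lifting) finite.emptyI finite.insertI insert_iff empty_iff)
  then have "s \<in> V1 \<or> s \<in> V2" using covered by blast
  then show False using s f1(2) f2(2) unfolding e_def by fastforce
qed

lemma weakly_dense_in_closed_subspace: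
  fixes C :: "'a::real_normed_vector set"
  assumes "weakly_dense C" "C \<subseteq> V" "subspace V" "closed V"
  shows "V = UNIV"
  using weakly_dense_in_union_of_closed_subspaces[of C V V] assms by blast

text \<open>If on C the ratio of two bounded functionals g, h is always a non-positive integer (g = -n h),
  then C is not weakly dense: near a point where g / h = -1/2 this is impossible.\<close>

lemma not_weakly_dense_integer_ratio:
  fixes C :: "'a::real_normed_vector set"
  assumes g: "bounded_linear g" and h: "bounded_linear h"
    and ratio: "\<And>u. u \<in> C \<Longrightarrow> \<exists>n::nat. g u = - (real n * h u)"
    and y: "h y = - 2 * g y" "g y \<noteq> 0"
  shows "\<not> weakly_dense C"
proof
  assume "weakly_dense C"
  define e where "e = \<bar>g y\<bar> / 2"
  have "e > 0" using y(2) by (simp add: e_def)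
  then obtain u where "u \<in> C" and u: "\<bar>g u - g y\<bar> < e" "\<bar>h u - h y\<bar> < e"
    using \<open>weakly_dense C\<close> g h unfolding weakly_dense_def
    by (metis (no_types, lifting) finite.emptyI finite.insertI insert_iff empty_iff)
  obtain n :: nat where n: "g u = - (real n * h u)" using ratio[OF \<open>u \<in> C\<close>] by blast
  have small: "\<bar>g u\<bar> < 3 / 2 * \<bar>g y\<bar>" "\<bar>g u\<bar> > \<bar>g y\<bar> / 2"
    using u(1) unfolding e_def by (auto simp: abs_if split: if_splits)
  have large: "\<bar>h u\<bar> > 3 / 2 * \<bar>g y\<bar>"
    using u(2) y(1) unfolding e_def by (auto simp: abs_if split: if_splits)
  show False
  proof (cases "n = 0")
    case True
    then show False using n small by simp
  next
    case False
    then have "\<bar>h u\<bar> \<le> real n * \<bar>h u\<bar>" by (simp add: mult_le_cancel_right1)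
    also have "\<dots> = \<bar>g u\<bar>" using n by (simp add: abs_mult)
    finally show False using small large by simp
  qed
qed

lemma functional_nonzero_at_two_points:
  fixes P Q :: "'a::real_normed_vector"
  assumes "P \<noteq> 0" "Q \<noteq> 0"
  obtains g :: "'a \<Rightarrow> real" where "bounded_linear g" "g P \<noteq> 0" "g Q \<noteq> 0"
proof -
  obtain f1 :: "'a \<Rightarrow> real" where f1: "bounded_linear f1" "f1 P \<noteq> 0"
    using closed_subspace_separation[OF subspace_single_0 closed_singleton, of P] assms(1) by auto
  obtain f2 :: "'a \<Rightarrow> real" where f2: "bounded_linear f2" "f2 Q \<noteq> 0"
    using closed_subspace_separation[OF subspace_single_0 closed_singleton, of Q] assms(2) by auto
  consider "f1 Q \<noteq> 0" | "f2 P \<noteq> 0" | "f1 Q = 0" "f2 P = 0" by blast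
  then show thesis
  proof cases
    case 3
    have "bounded_linear (\<lambda>u. f1 u + f2 u)" using f1(1) f2(1) by (rule bounded_linear_add)
    then show thesis using that 3 f1(2) f2(2) by simp
  qed (use that f1 f2 in blast)+
qed

lemma annihilator_closed_subspace:
  fixes w :: "'a::real_normed_algebra"
  shows "subspace {u. w * u = 0}" and "closed {u. w * u = 0}"
  by (auto intro!: linear_subspace_kernel closed_Collect_eq continuous_intros
      bounded_linear.linear[OF bounded_linear_mult_right])

lemma subspace_scalars: "subspace (scalars cplx)"
  unfolding subspace_def scalars_def
  by (auto simp: scaleR_conv_of_real)

lemma closed_scalars: "closed (scalars cplx)"
  by (simp add: scalars_def closed_complex_Reals)

lemma scalars_mult: "z \<in> scalars cplx \<Longrightarrow> w \<in> scalars cplx \<Longrightarrow> z * w \<in> scalars cplx"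
  by (auto simp: scalars_def)

locale scalar_action =
  fixes cplx :: bool and J :: "'a::{real_normed_algebra, comm_ring} \<Rightarrow> 'a"
  assumes scalar_structure: "scalar_structure cplx J"
begin

lemma J_bounded_linear: "bounded_linear J"
  using scalar_structure unfolding scalar_structure_def by (cases cplx) (auto simp: bounded_linear_zero)

lemma J_mult: "J (u * v) = J u * v"
  using scalar_structure unfolding scalar_structure_def by (cases cplx) auto

lemma scal_bounded_linear: "bounded_linear (scal J z)"
  unfolding scal_def[abs_def]
  by (intro bounded_linear_add bounded_linear_ident bounded_linear_scaleR_right
      bounded_linear_compose[OF bounded_linear_scaleR_right J_bounded_linear])

lemma scal_linear: "linear (scal J z)"
  using scal_bounded_linear by (rule bounded_linear.linear)

lemma scal_zero [simp]: "scal J z 0 = 0"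
  using linear_0[OF scal_linear] .

lemma scal_mult_left: "scal J z u * v = scal J z (u * v)"
  by (simp add: scal_def algebra_simps J_mult)

lemma scal_mult_right: "v * scal J z u = scal J z (v * u)"
  using scal_mult_left[of z u v] by (simp add: mult.commute)

lemma scal_scal:
  assumes "z \<in> scalars cplx" "w \<in> scalars cplx"
  shows "scal J z (scal J w u) = scal J (z * w) u"
proof (cases cplx)
  case True
  then have JJ: "J (J x) = - x" for x using scalar_structure unfolding scalar_structure_def by auto
  have "linear J" using J_bounded_linear bounded_linear.linear by blast
  then show ?thesis by (simp add: scal_def linear_add linear_scale JJ algebra_simps)
next
  case False
  then show ?thesis
    using assms scalar_structure by (simp add: scalars_def scalar_structure_def scal_def complex_is_Real_iff)
qed

lemma scal_norm:
  assumes "z \<in> scalars cplx"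
  shows "norm (scal J z u) = cmod z * norm u"
proof (cases cplx)
  case True
  then show ?thesis using scalar_structure unfolding scalar_structure_def by auto
next
  case False
  then have "Im z = 0" using assms by (simp add: scalars_def complex_is_Real_iff)
  then show ?thesis
    using False scalar_structure by (simp add: scalar_structure_def scal_def cmod_def)
qed

definition line :: "'a \<Rightarrow> 'a set" where
  "line x = (\<lambda>z. scal J z x) ` scalars cplx"

lemma line_bounded_linear: "bounded_linear (\<lambda>z. scal J z x)"
  unfolding scal_def
  by (intro bounded_linear_add bounded_linear_compose[OF bounded_linear_scaleR_left]
      bounded_linear_Re bounded_linear_Im)

lemma subspace_line: "subspace (line x)"
  unfolding line_def
  using line_bounded_linear bounded_linear.linear subspace_scalars by (blast intro: linear_subspace_image)

lemma closed_line: "closed (line x)"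
proof (cases "x = 0")
  case True
  then have "line x = {0}" unfolding line_def using subspace_0[OF subspace_scalars] by auto
  then show ?thesis by simp
next
  case False
  have "complete (scalars cplx)" using closed_scalars by (simp add: complete_eq_closed)
  then have "complete (line x)"
    unfolding line_def using False scal_norm
    by (intro complete_isometric_image[OF _ subspace_scalars line_bounded_linear])
      (auto simp: mult.commute)
  then show ?thesis by (rule complete_imp_closed)
qed

text \<open>A non-degenerate algebra which is a single scalar line carries no non-zero derivation:
  if M x = \<mu> x and x x = \<kappa> x, the Leibniz rule gives \<kappa>\<mu> x = 2\<kappa>\<mu> x.\<close>

lemma derivation_vanishes_on_line_algebra:
  assumes der: "derivation cplx J M" and nd: "non_degenerate TYPE('a)" and all: "line x = UNIV"
  shows "M u = 0"
proof -
  have M_lin: "linear M" and M_scal: "\<And>z u. z \<in> scalars cplx \<Longrightarrow> M (scal J z u) = scal J z (M u)"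
    and leibniz: "\<And>u v. M (u * v) = M u * v + u * M v"
    using der bounded_linear.linear unfolding derivation_def lin_op_def by blast+
  have on_line: "\<exists>\<eta>\<in>scalars cplx. w = scal J \<eta> x" for w
    using all unfolding line_def by blast
  have "M x = 0"
  proof (cases "x * x = 0")
    case True
    have "x * v = 0" for v
      using on_line[of v] True scal_mult_right by auto
    then have "x = 0" using nd unfolding non_degenerate_def by blast
    then show ?thesis using linear_0[OF M_lin] by simp
  next
    case False
    obtain \<kappa> where \<kappa>: "\<kappa> \<in> scalars cplx" "x * x = scal J \<kappa> x" using on_line by blast
    obtain \<mu> where \<mu>: "\<mu> \<in> scalars cplx" "M x = scal J \<mu> x" using on_line by blast
    have "scal J (\<kappa> * \<mu>) x = M (x * x)"
      using \<kappa> \<mu> M_scal scal_scal by simp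
    also have "\<dots> = 2 *\<^sub>R scal J \<mu> (x * x)"
      using leibniz \<mu>(2) scal_mult_left scal_mult_right by (simp add: scaleR_2 mult.commute)
    also have "\<dots> = 2 *\<^sub>R scal J (\<kappa> * \<mu>) x"
      using \<kappa> \<mu> scal_scal by (simp add: mult.commute)
    finally have "scal J (\<kappa> * \<mu>) x = 0" by (simp add: scaleR_2)
    then have "cmod (\<kappa> * \<mu>) * norm x = 0"
      using scal_norm[OF scalars_mult[OF \<kappa>(1) \<mu>(1)], of x] by simp
    moreover have "\<kappa> \<noteq> 0" "x \<noteq> 0" using False \<kappa>(2) by (auto simp: scal_def)
    ultimately have "\<mu> = 0" by simp
    then show ?thesis using \<mu>(2) by (simp add: scal_def)
  qed
  moreover obtain \<eta> where "\<eta> \<in> scalars cplx" "u = scal J \<eta> x" using on_line by blast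
  ultimately show ?thesis using M_scal by simp
qed

end


locale multiplication_shift = scalar_action +
  fixes M :: "'a \<Rightarrow> 'a" and a :: 'a and c :: complex
  assumes derivation: "derivation cplx J M" and c_scalar: "c \<in> scalars cplx"
begin

definition T :: "'a \<Rightarrow> 'a" where
  "T u = scal J c u + a * u"

lemma M_linear: "linear M"
  and M_scal: "z \<in> scalars cplx \<Longrightarrow> M (scal J z u) = scal J z (M u)"
  and leibniz: "M (u * v) = M u * v + u * M v"
  using derivation bounded_linear.linear unfolding derivation_def lin_op_def by blast+

lemma T_bounded_linear: "bounded_linear T"
  unfolding T_def[abs_def] by (intro bounded_linear_add scal_bounded_linear bounded_linear_mult_right)

lemma T_linear: "linear T"
  using T_bounded_linear by (rule bounded_linear.linear)

lemma T_mult_right: "v * T u = T (v * u)"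
  unfolding T_def by (simp add: distrib_left scal_mult_right mult.left_commute)

lemma T_scal: "z \<in> scalars cplx \<Longrightarrow> T (scal J z u) = scal J z (T u)"
  unfolding T_def
  by (simp add: scal_scal c_scalar scal_mult_right linear_add[OF scal_linear] mult.commute)

lemma M_T: "M (T u) = T (M u) + M a * u"
  unfolding T_def by (simp add: linear_add[OF M_linear] M_scal[OF c_scalar] leibniz algebra_simps)

lemma iterate_mult_right: "v * (T ^^ n) u = (T ^^ n) (v * u)"
  by (induction n arbitrary: u) (simp_all add: T_mult_right)

lemma iterate_zero: "(T ^^ n) 0 = 0"
  by (induction n) (simp_all add: linear_0[OF T_linear])

lemma orbit_cone_mult:
  assumes "u \<in> orbit_cone cplx J T x"
  shows "\<exists>z n. z \<in> scalars cplx \<and> u = scal J z ((T ^^ n) x)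
    \<and> (\<forall>w. w * u = scal J z ((T ^^ n) (w * x)))"
proof -
  obtain z n where "z \<in> scalars cplx" "u = scal J z ((T ^^ n) x)"
    using assms unfolding orbit_cone_def by blast
  then show ?thesis by (auto simp: scal_mult_right iterate_mult_right)
qed

definition wronskian :: "'a \<Rightarrow> 'a \<Rightarrow> 'a" where
  "wronskian x u = u * M x - x * M u"

lemma wronskian_bounded_linear: "bounded_linear (wronskian x)"
  unfolding wronskian_def[abs_def] using derivation unfolding derivation_def lin_op_def
  by (intro bounded_linear_sub bounded_linear_mult_left
      bounded_linear_compose[OF bounded_linear_mult_right]) auto

lemma wronskian_scal: "z \<in> scalars cplx \<Longrightarrow> wronskian x (scal J z u) = scal J z (wronskian x u)"
  unfolding wronskian_def
  by (simp add: M_scal scal_mult_left scal_mult_right linear_diff[OF scal_linear])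

lemma wronskian_T: "wronskian x (T w) = T (wronskian x w) - M a * x * w"
proof -
  have "wronskian x (T w) = T w * M x - x * (T (M w) + M a * w)"
    unfolding wronskian_def M_T ..
  also have "\<dots> = T (w * M x) - T (x * M w) - M a * x * w"
    using T_mult_right[of "M x" w] T_mult_right[of x "M w"] by (simp add: algebra_simps)
  also have "\<dots> = T (wronskian x w) - M a * x * w"
    unfolding wronskian_def by (simp add: linear_diff[OF T_linear])
  finally show ?thesis .
qed

lemma T_wronskian_iterate: "T (wronskian x ((T ^^ n) x)) = - (real n *\<^sub>R (M a * x * (T ^^ n) x))"
proof (induction n)
  case 0
  then show ?case by (simp add: wronskian_def linear_0[OF T_linear])
next
  case (Suc n)
  let ?w = "(T ^^ n) x"
  have "T (wronskian x ((T ^^ Suc n) x)) = T (T (wronskian x ?w)) - T (M a * x * ?w)"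
    by (simp add: wronskian_T linear_diff[OF T_linear])
  also have "\<dots> = - (real (Suc n) *\<^sub>R (M a * x * T ?w))"
    using Suc T_mult_right[of "M a * x" ?w]
    by (simp add: linear_neg[OF T_linear] linear_scale[OF T_linear] algebra_simps)
  finally show ?case by simp
qed

lemma orbit_cone_wronskian:
  assumes "u \<in> orbit_cone cplx J T x"
  shows "\<exists>n::nat. T (wronskian x u) = - (real n *\<^sub>R (M a * x * u))"
proof -
  obtain z n where z: "z \<in> scalars cplx" and u: "u = scal J z ((T ^^ n) x)"
    using orbit_cone_mult[OF assms] by blast
  have "T (wronskian x u) = scal J z (T (wronskian x ((T ^^ n) x)))"
    unfolding u by (simp add: wronskian_scal T_scal z)
  also have "\<dots> = - (real n *\<^sub>R (M a * x * u))"
    unfolding T_wronskian_iterate u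
    by (simp add: linear_neg[OF scal_linear] linear_scale[OF scal_linear] scal_mult_right)
  finally show ?thesis by blast
qed

lemma orbit_cone_functional_ratio:
  fixes g :: "'a \<Rightarrow> real"
  assumes g: "linear g" and orbit: "u \<in> orbit_cone cplx J T x"
  shows "\<exists>n::nat. g (T (wronskian x u)) = - (real n * g (M a * x * u))"
proof -
  obtain n :: nat where "T (wronskian x u) = - (real n *\<^sub>R (M a * x * u))"
    using orbit_cone_wronskian[OF orbit] by blast
  then show ?thesis by (auto simp: linear_neg[OF g] linear_scale[OF g])
qed

text \<open>Consequences of a weakly dense orbit cone of x.  An element annihilating x annihilates
  the whole orbit, hence a weakly dense set, hence everything.\<close>

lemma annihilator_of_weakly_dense_orbit:
  assumes dense: "weakly_dense (orbit_cone cplx J T x)" and nd: "non_degenerate TYPE('a)"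
    and wx: "w * x = 0"
  shows "w = 0"
proof -
  have "orbit_cone cplx J T x \<subseteq> {u. w * u = 0}"
    using wx iterate_zero orbit_cone_mult by fastforce
  then have "{u. w * u = 0} = UNIV"
    using weakly_dense_in_closed_subspace[OF dense] annihilator_closed_subspace by blast
  then show ?thesis using nd unfolding non_degenerate_def by blast
qed

text \<open>If T kills w x, the orbit lies in the annihilator of w together with the line through x;
  the line cannot be everything because M a \<noteq> 0.\<close>

lemma T_annihilator_of_weakly_dense_orbit:
  assumes dense: "weakly_dense (orbit_cone cplx J T x)" and nd: "non_degenerate TYPE('a)"
    and Ma: "M a \<noteq> 0" and Twx: "T (w * x) = 0"
  shows "w = 0"
proof -
  have "u \<in> {u. w * u = 0} \<union> line x" if orbit: "u \<in> orbit_cone cplx J T x" for u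
  proof -
    obtain z n where z: "z \<in> scalars cplx" "u = scal J z ((T ^^ n) x)"
      and mult: "w * u = scal J z ((T ^^ n) (w * x))"
      using orbit_cone_mult[OF orbit] by blast
    show ?thesis
    proof (cases n)
      case 0
      then show ?thesis using z unfolding line_def by auto
    next
      case (Suc m)
      have "(T ^^ n) (w * x) = 0" unfolding Suc funpow_Suc_right comp_apply Twx iterate_zero ..
      then show ?thesis using mult by simp
    qed
  qed
  then have "{u. w * u = 0} = UNIV \<or> line x = UNIV"
    by (intro weakly_dense_in_union_of_closed_subspaces[OF dense _ annihilator_closed_subspace
          subspace_line closed_line]) blast
  moreover have "line x \<noteq> UNIV"
    using derivation_vanishes_on_line_algebra[OF derivation nd] Ma by blast
  ultimately show ?thesis using nd unfolding non_degenerate_def by auto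
qed

text \<open>With b = M a, the elements P = b x x and Q = T P are non-zero, and a
  functional g non-vanishing at both turns u \<mapsto> g (T (W_x u)) and u \<mapsto> g (b x u) into
  functionals whose ratio is a non-positive integer on the orbit cone but equals -1/2 at
  x + (g P / g Q) T x; so the orbit cone is not weakly dense.\<close>

lemma not_weakly_supercyclic:
  assumes nd: "non_degenerate TYPE('a)" and Ma: "M a \<noteq> 0"
  shows "\<not> weakly_supercyclic cplx J T"
proof
  assume "weakly_supercyclic cplx J T"
  then obtain x where dense: "weakly_dense (orbit_cone cplx J T x)"
    unfolding weakly_supercyclic_def by blast
  define b where "b = M a"
  define P where "P = b * x * x"
  have bx: "b * x \<noteq> 0" using annihilator_of_weakly_dense_orbit[OF dense nd] Ma b_def by blast
  have P: "P \<noteq> 0"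
    using annihilator_of_weakly_dense_orbit[OF dense nd, of "b * x"] bx unfolding P_def by blast
  have TP: "T P \<noteq> 0"
    using T_annihilator_of_weakly_dense_orbit[OF dense nd Ma, of "b * x"] bx unfolding P_def by blast
  obtain g :: "'a \<Rightarrow> real" where g: "bounded_linear g" "g P \<noteq> 0" "g (T P) \<noteq> 0"
    using functional_nonzero_at_two_points[OF P TP] by blast
  define gW where "gW u = g (T (wronskian x u))" for u
  define gB where "gB u = g (b * x * u)" for u
  have gW: "bounded_linear gW" unfolding gW_def[abs_def]
    by (intro bounded_linear_compose[OF g(1)] bounded_linear_compose[OF T_bounded_linear]
        wronskian_bounded_linear)
  have gB: "bounded_linear gB" unfolding gB_def[abs_def]
    by (intro bounded_linear_compose[OF g(1)] bounded_linear_mult_right)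
  have g_lin: "linear g" using g(1) by (rule bounded_linear.linear)
  have ratio: "\<exists>n::nat. gW u = - (real n * gB u)" if "u \<in> orbit_cone cplx J T x" for u
    using orbit_cone_functional_ratio[OF g_lin that] unfolding gW_def gB_def b_def .
  have gW_x: "gW x = 0" "gW (T x) = - g (T P)"
    using T_wronskian_iterate[of x 0] T_wronskian_iterate[of x 1]
    by (simp_all add: gW_def P_def b_def T_mult_right linear_0[OF g_lin] linear_neg[OF g_lin])
  have gB_x: "gB x = g P" "gB (T x) = g (T P)"
    by (simp_all add: gB_def P_def T_mult_right)
  define y where "y = x + (g P / g (T P)) *\<^sub>R T x"
  have gy: "gW y = - g P" "gB y = 2 * g P"
    unfolding y_def using g(3) gW_x gB_x
    by (simp_all add: linear_add[OF bounded_linear.linear[OF gW]] linear_scale[OF bounded_linear.linear[OF gW]]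
        linear_add[OF bounded_linear.linear[OF gB]] linear_scale[OF bounded_linear.linear[OF gB]])
  have "\<not> weakly_dense (orbit_cone cplx J T x)"
    by (rule not_weakly_dense_integer_ratio[OF gW gB ratio, where y = y]) (use gy g(2) in auto)
  then show False using dense by contradiction
qed

end

lemma supercyclic_imp_weakly_supercyclic:
  "supercyclic cplx J T \<Longrightarrow> weakly_supercyclic cplx J T"
  unfolding supercyclic_def weakly_supercyclic_def using dense_imp_weakly_dense by blast

theorem proposition3p4:
  fixes a :: "'a::{real_normed_algebra, comm_ring, banach}"
    and cplx :: bool and J :: "'a \<Rightarrow> 'a" and M :: "'a \<Rightarrow> 'a"
  assumes "scalar_structure cplx J"
    and "non_degenerate TYPE('a)"
    and "derivation cplx J M"
    and "M a \<noteq> 0"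
  shows "(\<forall>c\<in>scalars cplx. \<not> supercyclic cplx J (\<lambda>x. scal J c x + a * x))
    \<and> (\<forall>(R::'a \<Rightarrow> 'a) (Y::'a set) (nY::'a \<Rightarrow> real).
         lin_op cplx J R \<and> closure (range R) = UNIV \<and> (\<forall>x. R (a * x) = a * R x)
         \<and> embedded_banach cplx J Y nY \<and> in_class_Y Y nY \<and> range R \<subseteq> Y
         \<longrightarrow> (\<forall>c\<in>scalars cplx. \<not> weakly_supercyclic cplx J (\<lambda>x. scal J c x + a * x)))"
proof -
  have "\<not> weakly_supercyclic cplx J (\<lambda>x. scal J c x + a * x)"
    if "c \<in> scalars cplx" for c
  proof -
    interpret multiplication_shift cplx J M a c
      using assms(1,3) that by unfold_locales
    show ?thesis
      using not_weakly_supercyclic[OF assms(2,4)] unfolding T_def[abs_def] .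
  qed
  then show ?thesis using supercyclic_imp_weakly_supercyclic by blast
qed

end
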